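(* Let $n \geq 3$ and let $(\mu, \Sigma)$ satisfy the normalization below. Then there exists an infinite set $\mathcal{S}$ of pairs $(\mu', \Sigma')$, each satisfying the same normalization, such that for all $i, j \in [n]$ and all $(\mu', \Sigma') \in \mathcal{S}$, $$\Pr_{X \sim \mathcal{N}(\mu, \Sigma)}\{X_i \geq X_j\} = \Pr_{X \sim \mathcal{N}(\mu', \Sigma')}\{X_i \geq X_j\}.$$
   Context: Correlated probit model: utilities $X \sim \mathcal{N}(\mu, \Sigma)$ with $\mu \in \mathbb{R}^n$ and $\Sigma \in \mathbb{R}^{n\times n}$ symmetric positive semidefinite. Normalization: $\langle \mu, \mathbf{1}\rangle = 0$, $\Sigma \mathbf{1} = 0$, $\operatorname{Tr}(\Sigma) = n$, and $\operatorname{rank}(\Sigma) = n-1$, where $\mathbf{1}$ is the all-ones vector. This normalization does not change the distribution of choices. *)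

theory Defs
  imports "HOL-Probability.Probability"
begin

definition std_normal_measure :: "real measure" where
  "std_normal_measure = density lborel std_normal_density"

definition std_gauss_vec :: "('n::finite \<Rightarrow> real) measure" where
  "std_gauss_vec = PiM UNIV (\<lambda>_. std_normal_measure)"

text \<open>Multivariate normal N(mu, Sg): law of mu + A z with z standard
  Gaussian and A A^T = Sg (A exists for PSD Sg; the law does not depend
  on the choice of A).\<close>
definition mvn :: "real^'n::finite \<Rightarrow> real^'n^'n \<Rightarrow> (real^'n) measure" where
  "mvn mu Sg = distr std_gauss_vec borel
     (\<lambda>z. mu + (SOME A :: real^'n^'n. A ** transpose A = Sg) *v (\<chi> i. z i))"

definition psd :: "real^'n::finite^'n \<Rightarrow> bool" where
  "psd Sg \<longleftrightarrow> transpose Sg = Sg \<and> (\<forall>x. 0 \<le> x \<bullet> (Sg *v x))"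

definition probit_normalized :: "real^'n::finite \<Rightarrow> real^'n^'n \<Rightarrow> bool" where
  "probit_normalized mu Sg \<longleftrightarrow>
     psd Sg \<and> mu \<bullet> (1::real^'n) = 0 \<and> Sg *v (1::real^'n) = 0 \<and>
     trace Sg = real CARD('n) \<and> rank Sg = CARD('n) - 1"

definition pair_prob :: "real^'n::finite \<Rightarrow> real^'n^'n \<Rightarrow> 'n \<Rightarrow> 'n \<Rightarrow> real" where
  "pair_prob mu Sg i j = measure (mvn mu Sg) {x. x $ j \<le> x $ i}"

end

theory Submission
  imports Defs
begin

(*
  Pairwise choice probabilities see the model only through the ratios
  (mu_i - mu_j) / sqrt d_ij, where d_ij = Sg_ii + Sg_jj - 2 Sg_ij is the variance of X_i - X_j.
  Multiplying both mu_i - mu_j and sqrt d_ij by c_ij = 1 + e (a_i + a_j) therefore changes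
  nothing. The new mean differences are again the differences of a vector, namely of mu + e g,
  whenever g_i - g_j = (a_i + a_j) (mu_i - mu_j): take a = mu and g = mu^2 if mu is not
  constant, otherwise g = 0 and any non-constant a.

  The new matrix c_ij^2 d_ij has to be realised as the variances of differences of a covariance.
  The normalization makes Sg positive definite on the hyperplane orthogonal to 1, i.e. d is
  conditionally negative definite; this is an open condition, so it persists for small e, and
  classical multidimensional scaling turns such a matrix back into a covariance whose kernel is
  spanned by 1. Rescaling to trace n gives a normalized model for every small e > 0, and for a
  third index k the ratio c_ik / c_jk tells different values of e apart.
*)

section \<open>Positive semidefinite matrices\<close>

lemma inner_matrix_vector_symmetric:
  fixes S :: "real^'n::finite^'n"
  assumes "transpose S = S"
  shows "x \<bullet> (S *v y) = (S *v x) \<bullet> y"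
  by (metis assms dot_lmul_matrix transpose_matrix_vector)

lemma symmetric_matrix_entry: "transpose S = S \<Longrightarrow> S $ i $ j = S $ j $ i"
  by (metis transpose_def vec_lambda_beta)

lemma quadratic_form_eq_sum:
  "y \<bullet> ((S::real^'n::finite^'n) *v y) = (\<Sum>i\<in>UNIV. \<Sum>j\<in>UNIV. y $ i * y $ j * S $ i $ j)"
  by (simp add: inner_vec_def matrix_vector_mult_def sum_distrib_left ac_simps)

lemma quadratic_form_axis: "axis k 1 \<bullet> ((S::real^'n::finite^'n) *v axis k 1) = S $ k $ k"
  by (simp add: inner_axis' matrix_vector_mult_basis column_def)

lemma quadratic_form_add_scaleR:
  fixes S :: "real^'n::finite^'n"
  assumes "transpose S = S"
  shows "(x + t *\<^sub>R v) \<bullet> (S *v (x + t *\<^sub>R v))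
    = x \<bullet> (S *v x) + 2 * t * ((S *v x) \<bullet> v) + t\<^sup>2 * (v \<bullet> (S *v v))"
  using inner_matrix_vector_symmetric[OF assms, of x v]
  by (simp add: matrix_vector_right_distrib matrix_vector_mult_scaleR inner_add_left
      inner_add_right inner_commute[of v] power2_eq_square algebra_simps)

lemma psd_quadratic_form_eq_0_imp:
  fixes S :: "real^'n::finite^'n"
  assumes "psd S" and "x \<bullet> (S *v x) = 0"
  shows "S *v x = 0"
proof (rule ccontr)
  txt \<open>The form is nonnegative along x - s (S x), but its slope at s = 0 is -2 |S x|^2.\<close>
  assume "S *v x \<noteq> 0"
  define v where "v = S *v x"
  define a where "a = v \<bullet> v"
  define q where "q = v \<bullet> (S *v v)"
  have "a > 0" using \<open>S *v x \<noteq> 0\<close> by (simp add: a_def v_def)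
  have "q \<ge> 0" using assms(1) by (simp add: psd_def q_def)
  define s where "s = a / (q + 1)"
  have "s > 0" using \<open>a > 0\<close> \<open>q \<ge> 0\<close> by (simp add: s_def)
  have "0 \<le> (x + (- s) *\<^sub>R v) \<bullet> (S *v (x + (- s) *\<^sub>R v))"
    using assms(1) by (simp add: psd_def)
  also have "\<dots> = s * (s * q - 2 * a)"
    using assms quadratic_form_add_scaleR[of S x "- s" v]
    by (simp add: psd_def a_def q_def v_def power2_eq_square algebra_simps)
  finally have "2 * a \<le> s * q"
    using \<open>s > 0\<close> by (simp add: zero_le_mult_iff)
  moreover have "s * q < a"
    using \<open>a > 0\<close> \<open>q \<ge> 0\<close> by (simp add: s_def field_simps)
  ultimately show False using \<open>a > 0\<close> by simp
qed

lemma psd_diag_nonneg: "psd S \<Longrightarrow> 0 \<le> S $ k $ k"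
  using quadratic_form_axis[of k S] unfolding psd_def by metis

lemma psd_diag_eq_0_imp_column_eq_0:
  assumes "psd S" and "S $ k $ k = 0"
  shows "S $ p $ k = 0"
proof -
  have "S *v axis k 1 = 0"
    using assms by (intro psd_quadratic_form_eq_0_imp) (simp_all add: quadratic_form_axis)
  then show ?thesis
    by (metis matrix_vector_mult_basis column_def vec_lambda_beta zero_index)
qed

lemma psd_eq_0_iff_diag_eq_0: "psd S \<Longrightarrow> S = 0 \<longleftrightarrow> (\<forall>k. S $ k $ k = 0)"
  using psd_diag_eq_0_imp_column_eq_0 by (auto simp: vec_eq_iff)

lemma trace_pos_if_psd:
  assumes "psd S" and "S \<noteq> 0"
  shows "0 < trace S"
proof -
  obtain k where "S $ k $ k \<noteq> 0"
    using assms psd_eq_0_iff_diag_eq_0 by blast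
  then have "0 < S $ k $ k"
    using psd_diag_nonneg[OF assms(1), of k] by linarith
  then show ?thesis
    unfolding trace_def using psd_diag_nonneg[OF assms(1)] by (intro sum_pos2) auto
qed

definition schur_complement_at :: "real^'n::finite^'n \<Rightarrow> 'n \<Rightarrow> real^'n^'n" where
  "schur_complement_at S i = (\<chi> p q. S $ p $ q - S $ p $ i * S $ q $ i / S $ i $ i)"

lemma quadratic_form_schur_complement_at:
  fixes S :: "real^'n::finite^'n"
  assumes "transpose S = S"
  shows "x \<bullet> (schur_complement_at S i *v x) = x \<bullet> (S *v x) - ((S *v x) $ i)\<^sup>2 / S $ i $ i"
proof -
  have Sx: "(S *v x) $ i = (\<Sum>p\<in>UNIV. x $ p * S $ p $ i)"
    by (simp add: matrix_vector_mult_def symmetric_matrix_entry[OF assms, of i] mult.commute)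
  have "x \<bullet> (schur_complement_at S i *v x)
      = x \<bullet> (S *v x) - (\<Sum>p\<in>UNIV. \<Sum>q\<in>UNIV. x $ p * S $ p $ i * (x $ q * S $ q $ i)) / S $ i $ i"
    unfolding quadratic_form_eq_sum
    by (simp add: schur_complement_at_def right_diff_distrib sum_subtractf sum_divide_distrib
        mult.assoc mult.left_commute)
  also have "(\<Sum>p\<in>UNIV. \<Sum>q\<in>UNIV. x $ p * S $ p $ i * (x $ q * S $ q $ i)) = ((S *v x) $ i)\<^sup>2"
    by (simp add: Sx power2_eq_square sum_product)
  finally show ?thesis .
qed

lemma psd_schur_complement_at:
  assumes "psd S" and "0 < S $ i $ i"
  shows "psd (schur_complement_at S i)"
  unfolding psd_def
proof (intro conjI allI)
  have sym: "transpose S = S" using assms(1) by (simp add: psd_def)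
  show "transpose (schur_complement_at S i) = schur_complement_at S i"
    using symmetric_matrix_entry[OF sym]
    by (simp add: vec_eq_iff transpose_def schur_complement_at_def mult.commute)
  fix x :: "real^'a"
  define b where "b = (S *v x) $ i"
  define t where "t = - b / S $ i $ i"
  have "0 \<le> (x + t *\<^sub>R axis i 1) \<bullet> (S *v (x + t *\<^sub>R axis i 1))"
    using assms(1) by (simp add: psd_def)
  also have "\<dots> = x \<bullet> (S *v x) + 2 * t * b + t\<^sup>2 * S $ i $ i"
    by (simp add: quadratic_form_add_scaleR[OF sym] quadratic_form_axis inner_axis b_def)
  also have "\<dots> = x \<bullet> (S *v x) - b\<^sup>2 / S $ i $ i"
    using assms(2) by (simp add: t_def power2_eq_square field_simps)
  also have "\<dots> = x \<bullet> (schur_complement_at S i *v x)"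
    by (simp add: quadratic_form_schur_complement_at[OF sym] b_def)
  finally show "0 \<le> x \<bullet> (schur_complement_at S i *v x)" .
qed

lemma schur_complement_at_column:
  "0 < S $ i $ i \<Longrightarrow> schur_complement_at S i $ p $ i = 0"
  by (simp add: schur_complement_at_def)

lemma schur_complement_at_diag_support:
  assumes "psd S" and "0 < S $ i $ i"
  shows "{k. schur_complement_at S i $ k $ k \<noteq> 0} \<subseteq> {k. S $ k $ k \<noteq> 0} - {i}"
  using assms psd_diag_eq_0_imp_column_eq_0[OF assms(1)]
    symmetric_matrix_entry[of S] assms(1)
  by (auto simp: schur_complement_at_def psd_def)

lemma schur_complement_at_factor:
  fixes A :: "real^'n::finite^'n"
  assumes "A ** transpose A = schur_complement_at S i" and "\<And>p. A $ p $ i = 0"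
    and "0 < S $ i $ i"
  defines "B \<equiv> A + (\<chi> p q. if q = i then S $ p $ i / sqrt (S $ i $ i) else 0)"
  shows "B ** transpose B = S"
proof -
  have "(B ** transpose B) $ p $ r = S $ p $ r" for p r
  proof -
    have "(B ** transpose B) $ p $ r = (\<Sum>q\<in>UNIV. B $ p $ q * B $ r $ q)"
      by (simp add: matrix_matrix_mult_def transpose_def)
    also have "\<dots> = (\<Sum>q\<in>UNIV. A $ p $ q * A $ r $ q
        + (if q = i then S $ p $ i * S $ r $ i / S $ i $ i else 0))"
      using assms(2,3) by (intro sum.cong) (auto simp: B_def)
    also have "\<dots> = (A ** transpose A) $ p $ r + S $ p $ i * S $ r $ i / S $ i $ i"
      by (simp add: sum.distrib matrix_matrix_mult_def transpose_def)
    also have "\<dots> = S $ p $ r"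
      by (simp add: assms(1) schur_complement_at_def)
    finally show ?thesis .
  qed
  then show ?thesis by (simp add: vec_eq_iff)
qed

text \<open>Split off column i by a Schur complement. The support condition makes the factor of the
  complement vanish in column i, so that the new column does not interact with it.\<close>

lemma psd_factor_supported:
  fixes S :: "real^'n::finite^'n"
  assumes "psd S"
  shows "\<exists>A::real^'n^'n. A ** transpose A = S \<and> (\<forall>k p. S $ k $ k = 0 \<longrightarrow> A $ p $ k = 0)"
  using assms
proof (induction S rule: measure_induct_rule[where f = "\<lambda>S. card {k. S $ k $ k \<noteq> 0}"])
  case (less S)
  show ?case
  proof (cases "\<forall>k. S $ k $ k = 0")
    case True
    then show ?thesis
      using psd_eq_0_iff_diag_eq_0[OF less.prems] by (intro exI[of _ 0]) simp
  next
    case False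
    then obtain i where "S $ i $ i \<noteq> 0" by blast
    then have i: "0 < S $ i $ i" using psd_diag_nonneg[OF less.prems, of i] by linarith
    define S' where "S' = schur_complement_at S i"
    have "card {k. S' $ k $ k \<noteq> 0} < card {k. S $ k $ k \<noteq> 0}"
      unfolding S'_def using \<open>S $ i $ i \<noteq> 0\<close>
      by (intro psubset_card_mono, simp)
        (use schur_complement_at_diag_support[OF less.prems i] in blast)
    then obtain A where A: "A ** transpose A = S'" "\<forall>k p. S' $ k $ k = 0 \<longrightarrow> A $ p $ k = 0"
      using less.IH psd_schur_complement_at[OF less.prems i] unfolding S'_def by blast
    define B where "B = A + (\<chi> p q. if q = i then S $ p $ i / sqrt (S $ i $ i) else 0)"
    have "B ** transpose B = S"
      unfolding B_def using A i schur_complement_at_column[OF i]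
      by (intro schur_complement_at_factor) (simp_all add: S'_def)
    moreover have "B $ p $ k = 0" if "S $ k $ k = 0" for k p
      using that A(2) schur_complement_at_diag_support[OF less.prems i] i
      by (auto simp: B_def S'_def)
    ultimately show ?thesis by blast
  qed
qed

lemma psd_factor: "psd S \<Longrightarrow> \<exists>A::real^'n::finite^'n. A ** transpose A = S"
  using psd_factor_supported by blast

section \<open>Centering and variances of differences\<close>

definition centering_matrix :: "real^'n::finite^'n" where
  "centering_matrix = mat 1 - (\<chi> i j. 1 / real CARD('n))"

lemma inner_one_eq_sum: "(1::real^'n::finite) \<bullet> x = (\<Sum>i\<in>UNIV. x $ i)"
  by (simp add: inner_vec_def)

lemma centering_matrix_mult:
  "centering_matrix *v x = x - ((\<Sum>i\<in>UNIV. x $ i) / real CARD('n::finite)) *\<^sub>R (1::real^'n)"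
proof -
  have "(\<chi> i j. 1 / real CARD('n)) *v x = ((\<Sum>i\<in>UNIV. x $ i) / real CARD('n)) *\<^sub>R (1::real^'n)"
    by (simp add: vec_eq_iff matrix_vector_mult_def sum_divide_distrib)
  then show ?thesis
    by (simp add: centering_matrix_def matrix_vector_mult_diff_rdistrib)
qed

lemma centering_matrix_one: "centering_matrix *v (1::real^'n::finite) = 0"
  by (simp add: centering_matrix_mult vec_eq_iff)

lemma centering_matrix_fixes: "(1::real^'n::finite) \<bullet> y = 0 \<Longrightarrow> centering_matrix *v y = y"
  by (simp add: centering_matrix_mult inner_one_eq_sum)

lemma transpose_centering_matrix:
  "transpose (centering_matrix :: real^'n::finite^'n) = centering_matrix"
  by (simp add: vec_eq_iff centering_matrix_def transpose_def mat_def)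

lemma centering_matrix_orthogonal_one: "(1::real^'n::finite) \<bullet> (centering_matrix *v x) = 0"
  by (metis centering_matrix_one transpose_centering_matrix inner_zero_left
      inner_matrix_vector_symmetric)

lemma centering_matrix_diff:
  "(centering_matrix *v x) $ i - (centering_matrix *v x) $ j = x $ i - x $ j"
  by (simp add: centering_matrix_mult)

lemma axis_diff_orthogonal_one: "(1::real^'n::finite) \<bullet> (axis i 1 - axis j 1) = 0"
  by (simp add: inner_diff_right inner_axis)

lemma dim_orthogonal_one: "dim {y::real^'n::finite. 1 \<bullet> y = 0} = CARD('n) - 1"
proof -
  have "(1::real^'n) \<noteq> 0" by (simp add: vec_eq_iff)
  then show ?thesis using dim_hyperplane[of "1::real^'n"] by simp
qed

lemma range_subset_orthogonal_one:
  fixes S :: "real^'n::finite^'n"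
  assumes "transpose S = S" and "S *v 1 = 0"
  shows "range (\<lambda>x. S *v x) \<subseteq> {y. 1 \<bullet> y = 0}"
  using inner_matrix_vector_symmetric[OF assms(1), of 1] assms(2) by auto

definition var_diff :: "real^'n::finite^'n \<Rightarrow> 'n \<Rightarrow> 'n \<Rightarrow> real" where
  "var_diff S i j = S $ i $ i + S $ j $ j - 2 * S $ i $ j"

lemma var_diff_refl [simp]: "var_diff S i i = 0"
  by (simp add: var_diff_def)

lemma var_diff_scaleR: "var_diff (c *\<^sub>R S) i j = c * var_diff S i j"
  by (simp add: var_diff_def algebra_simps)

lemma var_diff_eq_quadratic_form:
  assumes "transpose S = S"
  shows "var_diff S i j = (axis i 1 - axis j 1) \<bullet> (S *v (axis i 1 - axis j 1))"
  using symmetric_matrix_entry[OF assms, of i j]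
  by (simp add: var_diff_def matrix_vector_mult_diff_distrib inner_diff_left inner_diff_right
      inner_axis' matrix_vector_mult_basis column_def)

lemma quadratic_form_eq_var_diff:
  fixes S :: "real^'n::finite^'n"
  assumes "1 \<bullet> y = 0"
  shows "y \<bullet> (S *v y) = - (1/2) * (\<Sum>i\<in>UNIV. \<Sum>j\<in>UNIV. y $ i * y $ j * var_diff S i j)"
proof -
  have sum0: "(\<Sum>j\<in>UNIV. y $ j) = 0" using assms by (simp add: inner_one_eq_sum)
  have "(\<Sum>i\<in>UNIV. \<Sum>j\<in>UNIV. y $ i * y $ j * var_diff S i j)
      = (\<Sum>i\<in>UNIV. \<Sum>j\<in>UNIV. (y $ i * S $ i $ i) * y $ j)
        + (\<Sum>i\<in>UNIV. \<Sum>j\<in>UNIV. y $ i * (y $ j * S $ j $ j))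
        - 2 * (\<Sum>i\<in>UNIV. \<Sum>j\<in>UNIV. y $ i * y $ j * S $ i $ j)"
    by (simp add: var_diff_def sum.distrib sum_subtractf sum_distrib_left algebra_simps)
  also have "\<dots> = - 2 * (y \<bullet> (S *v y))"
    by (simp add: sum_distrib_left[symmetric] sum_distrib_right[symmetric] sum0
        quadratic_form_eq_sum)
  finally show ?thesis by simp
qed

lemma range_eq_orthogonal_one:
  fixes S :: "real^'n::finite^'n"
  assumes "transpose S = S" and "S *v 1 = 0" and "rank S = CARD('n) - 1"
  shows "range (\<lambda>x. S *v x) = {y. 1 \<bullet> y = 0}"
proof (rule subspace_dim_equal)
  show "subspace (range (\<lambda>x. S *v x))"
    by (rule linear_subspace_image[OF matrix_vector_mul_linear subspace_UNIV])
  show "subspace {y::real^'n. 1 \<bullet> y = 0}"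
    by (rule subspace_hyperplane)
  show "range (\<lambda>x. S *v x) \<subseteq> {y. 1 \<bullet> y = 0}"
    by (rule range_subset_orthogonal_one[OF assms(1,2)])
  show "dim {y::real^'n. 1 \<bullet> y = 0} \<le> dim (range (\<lambda>x. S *v x))"
    using assms(3) by (simp add: dim_orthogonal_one rank_dim_range)
qed

lemma quadratic_form_pos_orthogonal_one:
  fixes S :: "real^'n::finite^'n"
  assumes "psd S" and "S *v 1 = 0" and "rank S = CARD('n) - 1"
    and "1 \<bullet> y = 0" and "y \<noteq> 0"
  shows "0 < y \<bullet> (S *v y)"
proof (rule ccontr)
  assume "\<not> 0 < y \<bullet> (S *v y)"
  then have "y \<bullet> (S *v y) = 0"
    using assms(1) unfolding psd_def by (metis order_le_less)
  then have "S *v y = 0"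
    using assms(1) by (rule psd_quadratic_form_eq_0_imp[rotated])
  have sym: "transpose S = S" using assms(1) by (simp add: psd_def)
  obtain z where "y = S *v z"
    using range_eq_orthogonal_one[OF sym assms(2,3)] assms(4) by blast
  then have "y \<bullet> y = z \<bullet> (S *v y)"
    using inner_matrix_vector_symmetric[OF sym, of z y] by simp
  then show False
    using \<open>S *v y = 0\<close> assms(5) by simp
qed

lemma var_diff_pos:
  fixes S :: "real^'n::finite^'n"
  assumes "psd S" and "S *v 1 = 0" and "rank S = CARD('n) - 1" and "i \<noteq> j"
  shows "0 < var_diff S i j"
proof -
  have "axis i 1 - axis j 1 \<noteq> (0::real^'n)"
    using assms(4) by (metis axis_eq_axis eq_iff_diff_eq_0 zero_neq_one)
  then show ?thesis
    using assms(1) quadratic_form_pos_orthogonal_one[OF assms(1-3) axis_diff_orthogonal_one]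
    by (simp add: var_diff_eq_quadratic_form psd_def)
qed

section \<open>Conditionally negative definite kernels and classical scaling\<close>

definition conditionally_negative_definite :: "('n::finite \<Rightarrow> 'n \<Rightarrow> real) \<Rightarrow> bool" where
  "conditionally_negative_definite D \<longleftrightarrow>
     (\<forall>y::real^'n. 1 \<bullet> y = 0 \<longrightarrow> y \<noteq> 0 \<longrightarrow> (\<Sum>i\<in>UNIV. \<Sum>j\<in>UNIV. y $ i * y $ j * D i j) < 0)"

lemma conditionally_negative_definite_var_diff:
  fixes S :: "real^'n::finite^'n"
  assumes "psd S" and "S *v 1 = 0" and "rank S = CARD('n) - 1"
  shows "conditionally_negative_definite (var_diff S)"
  unfolding conditionally_negative_definite_def
  using quadratic_form_pos_orthogonal_one[OF assms] quadratic_form_eq_var_diff[of _ S] by force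

lemma abs_double_sum_le:
  fixes y :: "real^'n::finite" and f :: "'n \<Rightarrow> 'n \<Rightarrow> real"
  assumes "\<And>i j. \<bar>f i j\<bar> \<le> B"
  shows "\<bar>\<Sum>i\<in>UNIV. \<Sum>j\<in>UNIV. y $ i * y $ j * f i j\<bar> \<le> real CARD('n) ^ 2 * B * (y \<bullet> y)"
proof -
  have term_le: "\<bar>y $ i * y $ j * f i j\<bar> \<le> B * (y \<bullet> y)" for i j
  proof -
    have "\<bar>y $ i * y $ j * f i j\<bar> = \<bar>y $ i\<bar> * \<bar>y $ j\<bar> * \<bar>f i j\<bar>"
      by (simp add: abs_mult)
    also have "\<dots> \<le> norm y * norm y * B"
      by (intro mult_mono component_le_norm_cart assms) auto
    finally show ?thesis
      by (simp add: power2_norm_eq_inner[symmetric] power2_eq_square mult.commute)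
  qed
  have "\<bar>\<Sum>i\<in>UNIV. \<Sum>j\<in>UNIV. y $ i * y $ j * f i j\<bar>
      \<le> (\<Sum>i\<in>UNIV. \<Sum>j\<in>UNIV. \<bar>y $ i * y $ j * f i j\<bar>)"
    using order_trans[OF sum_abs sum_mono[OF sum_abs]] .
  also have "\<dots> \<le> (\<Sum>i\<in>(UNIV::'n set). \<Sum>j\<in>(UNIV::'n set). B * (y \<bullet> y))"
    by (intro sum_mono term_le)
  finally show ?thesis
    by (simp add: power2_eq_square)
qed

lemma conditionally_negative_definite_coercive:
  fixes D :: "'n::finite \<Rightarrow> 'n \<Rightarrow> real"
  assumes "conditionally_negative_definite D"
  obtains lam where "0 < lam"
    and "\<And>y::real^'n. 1 \<bullet> y = 0 \<Longrightarrow> lam * (y \<bullet> y) \<le> - (\<Sum>i\<in>UNIV. \<Sum>j\<in>UNIV. y $ i * y $ j * D i j)"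
proof -
  define q where "q y = - (\<Sum>i\<in>UNIV. \<Sum>j\<in>UNIV. y $ i * y $ j * D i j)" for y :: "real^'n"
  define T where "T = sphere (0::real^'n) 1 \<inter> {y. 1 \<bullet> y = 0}"
  have q_scale: "q (c *\<^sub>R y) = c\<^sup>2 * q y" for c y
    by (simp add: q_def sum_distrib_left power2_eq_square algebra_simps)
  obtain lam where lam: "0 < lam" "\<And>u. u \<in> T \<Longrightarrow> lam \<le> q u"
  proof (cases "T = {}")
    case True
    then show ?thesis using that[of 1] by simp
  next
    case False
    have "continuous_on T q"
      unfolding q_def by (intro continuous_intros)
    then obtain u0 where "u0 \<in> T" "\<And>u. u \<in> T \<Longrightarrow> q u0 \<le> q u"
      using continuous_attains_inf[OF _ False] compact_Int_closed[OF compact_sphere closed_hyperplane]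
      unfolding T_def by blast
    moreover have "0 < q u0"
      using assms \<open>u0 \<in> T\<close> by (auto simp: conditionally_negative_definite_def q_def T_def)
    ultimately show ?thesis using that by blast
  qed
  have "lam * (y \<bullet> y) \<le> q y" if "1 \<bullet> y = 0" for y
  proof (cases "y = 0")
    case False
    have "y /\<^sub>R norm y \<in> T"
      using False that by (simp add: T_def inner_scaleR_right)
    then have "lam * (norm y)\<^sup>2 \<le> q (y /\<^sub>R norm y) * (norm y)\<^sup>2"
      by (intro mult_right_mono lam(2)) auto
    also have "\<dots> = q y"
      using False by (simp add: q_scale power2_eq_square field_simps)
    finally show ?thesis by (simp add: power2_norm_eq_inner)
  qed (simp add: q_def)
  then show ?thesis using that lam(1) unfolding q_def by blast
qed

lemma conditionally_negative_definite_perturb: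
  fixes D :: "'n::finite \<Rightarrow> 'n \<Rightarrow> real"
  assumes "conditionally_negative_definite D"
  obtains \<delta> where "0 < \<delta>"
    and "\<And>D'. (\<And>i j. \<bar>D' i j - D i j\<bar> < \<delta>) \<Longrightarrow> conditionally_negative_definite D'"
proof -
  obtain lam where lam: "0 < lam"
    "\<And>y::real^'n. 1 \<bullet> y = 0 \<Longrightarrow> lam * (y \<bullet> y) \<le> - (\<Sum>i\<in>UNIV. \<Sum>j\<in>UNIV. y $ i * y $ j * D i j)"
    using conditionally_negative_definite_coercive[OF assms] by blast
  define \<delta> where "\<delta> = lam / (2 * real CARD('n) ^ 2)"
  have "0 < \<delta>" using lam(1) by (simp add: \<delta>_def)
  moreover have "conditionally_negative_definite D'" if D': "\<And>i j. \<bar>D' i j - D i j\<bar> < \<delta>" for D'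
    unfolding conditionally_negative_definite_def
  proof (intro allI impI)
    fix y :: "real^'n" assume "1 \<bullet> y = 0" "y \<noteq> 0"
    have "(\<Sum>i\<in>UNIV. \<Sum>j\<in>UNIV. y $ i * y $ j * D' i j)
        = (\<Sum>i\<in>UNIV. \<Sum>j\<in>UNIV. y $ i * y $ j * D i j)
          + (\<Sum>i\<in>UNIV. \<Sum>j\<in>UNIV. y $ i * y $ j * (D' i j - D i j))"
      by (simp add: sum.distrib[symmetric] algebra_simps)
    also have "\<dots> \<le> - lam * (y \<bullet> y) + real CARD('n) ^ 2 * \<delta> * (y \<bullet> y)"
      using lam(2)[OF \<open>1 \<bullet> y = 0\<close>]
        abs_double_sum_le[of "\<lambda>i j. D' i j - D i j", OF less_imp_le[OF D'], of y]
      by linarith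
    also have "\<dots> = - (lam / 2) * (y \<bullet> y)"
      by (simp add: \<delta>_def field_simps)
    also have "\<dots> < 0"
      using lam(1) \<open>y \<noteq> 0\<close> by simp
    finally show "(\<Sum>i\<in>UNIV. \<Sum>j\<in>UNIV. y $ i * y $ j * D' i j) < 0" .
  qed
  ultimately show ?thesis using that by blast
qed

text \<open>Classical multidimensional scaling: the Gram matrix -1/2 J D J of a matrix D of squared
  distances, J being the centering matrix.\<close>

definition mds_gram :: "('n::finite \<Rightarrow> 'n \<Rightarrow> real) \<Rightarrow> real^'n^'n" where
  "mds_gram D = centering_matrix ** (\<chi> i j. - D i j / 2) ** centering_matrix"

lemma mds_gram_mult:
  "mds_gram D *v x = centering_matrix *v ((\<chi> i j. - D i j / 2) *v (centering_matrix *v x))"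
  unfolding mds_gram_def by (metis matrix_vector_mul_assoc)

lemma transpose_mds_gram:
  assumes "\<And>i j. D i j = D j i"
  shows "transpose (mds_gram D) = mds_gram D"
proof -
  have "transpose (\<chi> i j. - D i j / 2) = (\<chi> i j. - D i j / 2)"
    using assms by (simp add: vec_eq_iff transpose_def)
  then show ?thesis
    by (simp add: mds_gram_def matrix_transpose_mul transpose_centering_matrix matrix_mul_assoc)
qed

lemma mds_gram_one: "mds_gram D *v 1 = 0"
  by (simp add: mds_gram_mult centering_matrix_one)

lemma quadratic_form_mds_gram:
  "x \<bullet> (mds_gram D *v x) = - (1/2) * (\<Sum>i\<in>UNIV. \<Sum>j\<in>UNIV.
     (centering_matrix *v x) $ i * (centering_matrix *v x) $ j * D i j)"
  unfolding mds_gram_mult inner_matrix_vector_symmetric[OF transpose_centering_matrix]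
  by (simp add: quadratic_form_eq_sum sum_distrib_left)

lemma mds_gram_quadratic_form_pos:
  assumes "conditionally_negative_definite D" and "centering_matrix *v x \<noteq> 0"
  shows "0 < x \<bullet> (mds_gram D *v x)"
proof -
  have "(\<Sum>i\<in>UNIV. \<Sum>j\<in>UNIV.
      (centering_matrix *v x) $ i * (centering_matrix *v x) $ j * D i j) < 0"
    using assms centering_matrix_orthogonal_one
    unfolding conditionally_negative_definite_def by blast
  then show ?thesis by (simp add: quadratic_form_mds_gram)
qed

lemma psd_mds_gram:
  assumes "\<And>i j. D i j = D j i" and "conditionally_negative_definite D"
  shows "psd (mds_gram D)"
  unfolding psd_def
proof (intro conjI allI transpose_mds_gram[OF assms(1)])
  fix x :: "real^'a"
  show "0 \<le> x \<bullet> (mds_gram D *v x)"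
    using mds_gram_quadratic_form_pos[OF assms(2), of x]
    by (cases "centering_matrix *v x = 0") (simp_all add: quadratic_form_mds_gram)
qed

lemma rank_mds_gram:
  fixes D :: "'n::finite \<Rightarrow> 'n \<Rightarrow> real"
  assumes "\<And>i j. D i j = D j i" and "conditionally_negative_definite D"
  shows "rank (mds_gram D) = CARD('n) - 1"
proof -
  define H where "H = {y::real^'n. 1 \<bullet> y = 0}"
  have "span H = H"
    unfolding H_def by (simp add: span_eq_iff subspace_hyperplane)
  have "inj_on (\<lambda>x. mds_gram D *v x) (span H)"
    unfolding \<open>span H = H\<close>
  proof (rule inj_onI)
    fix x y assume "x \<in> H" "y \<in> H" "mds_gram D *v x = mds_gram D *v y"
    then have "(x - y) \<bullet> (mds_gram D *v (x - y)) = 0"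
      by (simp add: matrix_vector_mult_diff_distrib)
    moreover have "centering_matrix *v (x - y) = x - y"
      using \<open>x \<in> H\<close> \<open>y \<in> H\<close> by (intro centering_matrix_fixes) (simp add: H_def inner_diff_right)
    ultimately show "x = y"
      using mds_gram_quadratic_form_pos[OF assms(2), of "x - y"] by auto
  qed
  then have "dim ((\<lambda>x. mds_gram D *v x) ` H) = dim H"
    by (rule dim_image_eq[OF matrix_vector_mul_linear])
  moreover have "dim ((\<lambda>x. mds_gram D *v x) ` H) \<le> rank (mds_gram D)"
    unfolding rank_dim_range by (rule dim_subset) auto
  moreover have "rank (mds_gram D) \<le> dim H"
    unfolding rank_dim_range H_def
    by (intro dim_subset range_subset_orthogonal_one transpose_mds_gram assms(1) mds_gram_one)
  ultimately show ?thesis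
    by (simp add: H_def dim_orthogonal_one)
qed

lemma var_diff_mds_gram:
  assumes "\<And>i j. D i j = D j i" and "\<And>i. D i i = 0"
  shows "var_diff (mds_gram D) i j = D i j"
proof -
  define v :: "real^'a" where "v = axis i 1 - axis j 1"
  have "centering_matrix *v v = v"
    unfolding v_def by (rule centering_matrix_fixes[OF axis_diff_orthogonal_one])
  then have "var_diff (mds_gram D) i j = v \<bullet> ((\<chi> i j. - D i j / 2) *v v)"
    using inner_matrix_vector_symmetric[OF transpose_centering_matrix, of v]
    by (simp add: var_diff_eq_quadratic_form[OF transpose_mds_gram[of D, OF assms(1)]]
        mds_gram_mult v_def)
  also have "\<dots> = D i j"
    using assms(1)[of i j] assms(2)
    by (simp add: v_def matrix_vector_mult_diff_distrib inner_diff_left inner_diff_right inner_axis'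
        matrix_vector_mult_basis column_def)
  finally show ?thesis .
qed

lemma rank_scaleR:
  fixes A :: "real^'n::finite^'m::finite"
  assumes "c \<noteq> 0"
  shows "rank (c *\<^sub>R A) = rank A"
proof -
  have scale: "(c *\<^sub>R A) *v x = A *v (c *\<^sub>R x)" for x
    by (simp add: scaleR_matrix_vector_assoc[symmetric] matrix_vector_mult_scaleR)
  have "A *v x = (c *\<^sub>R A) *v (x /\<^sub>R c)" for x
    using assms by (simp add: scale)
  then have "range (\<lambda>x. (c *\<^sub>R A) *v x) = range (\<lambda>x. A *v x)"
    by auto (metis rangeI scale)
  then show ?thesis by (simp add: rank_dim_range)
qed

definition probit_normalize :: "real^'n::finite \<Rightarrow> real^'n^'n \<Rightarrow> (real^'n) \<times> (real^'n^'n)" where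
  "probit_normalize m S =
    (let \<kappa> = real CARD('n) / trace S in (sqrt \<kappa> *\<^sub>R (centering_matrix *v m), \<kappa> *\<^sub>R S))"

lemma probit_normalize_eq:
  fixes S :: "real^'n::finite^'n"
  assumes "psd S" and "S *v 1 = 0" and "rank S = CARD('n) - 1" and "CARD('n) \<ge> 2"
    and "probit_normalize m S = (m', S')"
  shows "probit_normalized m' S'"
    and "\<exists>\<kappa>>0. m' = sqrt \<kappa> *\<^sub>R (centering_matrix *v m) \<and> S' = \<kappa> *\<^sub>R S"
proof -
  define \<kappa> where "\<kappa> = real CARD('n) / trace S"
  have eq: "m' = sqrt \<kappa> *\<^sub>R (centering_matrix *v m)" "S' = \<kappa> *\<^sub>R S"
    using assms(5) by (auto simp: probit_normalize_def Let_def \<kappa>_def)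
  have "S \<noteq> 0" using assms(3,4) by auto
  then have "0 < trace S" by (rule trace_pos_if_psd[OF assms(1)])
  then have "0 < \<kappa>" by (simp add: \<kappa>_def)
  then show "\<exists>\<kappa>>0. m' = sqrt \<kappa> *\<^sub>R (centering_matrix *v m) \<and> S' = \<kappa> *\<^sub>R S"
    using eq by blast
  have "psd S'"
    using assms(1) \<open>0 < \<kappa>\<close>
    by (simp add: eq psd_def transpose_scalar scaleR_matrix_vector_assoc[symmetric])
  moreover have "trace S' = \<kappa> * trace S"
    by (simp add: eq trace_def sum_distrib_left)
  then have "trace S' = real CARD('n)"
    using \<open>0 < trace S\<close> by (simp add: \<kappa>_def)
  moreover have "m' \<bullet> 1 = 0"
    using centering_matrix_orthogonal_one[of m] by (simp add: eq inner_commute)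
  ultimately show "probit_normalized m' S'"
    using assms(2,3) \<open>0 < \<kappa>\<close>
    by (simp add: probit_normalized_def eq rank_scaleR scaleR_matrix_vector_assoc[symmetric])
qed

section \<open>Pairwise probabilities of a Gaussian vector\<close>

lemma prob_space_std_normal_measure: "prob_space std_normal_measure"
  unfolding std_normal_measure_def by (rule prob_space_normal_density) simp

lemma sets_std_normal_measure [measurable_cong, simp]: "sets std_normal_measure = sets borel"
  unfolding std_normal_measure_def by simp

lemma space_std_normal_measure [simp]: "space std_normal_measure = UNIV"
  unfolding std_normal_measure_def by simp

lemma prob_space_std_gauss_vec: "prob_space (std_gauss_vec :: ('n::finite \<Rightarrow> real) measure)"
  unfolding std_gauss_vec_def by (rule prob_space_PiM) (simp add: prob_space_std_normal_measure)

lemma space_std_gauss_vec [simp]: "space (std_gauss_vec :: ('n::finite \<Rightarrow> real) measure) = UNIV"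
  unfolding std_gauss_vec_def by (simp add: space_PiM)

lemma std_gauss_vec_component_measurable [measurable]:
  "(\<lambda>z. z k) \<in> borel_measurable (std_gauss_vec :: ('n::finite \<Rightarrow> real) measure)"
proof -
  have "(\<lambda>z. z k) \<in> measurable (std_gauss_vec :: ('n \<Rightarrow> real) measure) std_normal_measure"
    unfolding std_gauss_vec_def by (rule measurable_component_singleton) simp
  then show ?thesis
    by (simp cong: measurable_cong_sets)
qed

lemma distr_std_gauss_vec_component:
  "distr (std_gauss_vec :: ('n::finite \<Rightarrow> real) measure) borel (\<lambda>z. z k) = std_normal_measure"
proof -
  have "distr (std_gauss_vec :: ('n \<Rightarrow> real) measure) borel (\<lambda>z. z k)
      = distr (std_gauss_vec :: ('n \<Rightarrow> real) measure) std_normal_measure (\<lambda>z. z k)"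
    by (rule distr_cong) auto
  also have "\<dots> = std_normal_measure"
    unfolding std_gauss_vec_def
    by (rule distr_PiM_component) (auto simp: prob_space_std_normal_measure)
  finally show ?thesis .
qed

lemma distributed_std_gauss_vec_component:
  "distributed (std_gauss_vec :: ('n::finite \<Rightarrow> real) measure) lborel (\<lambda>z. z k) std_normal_density"
proof -
  have "distr (std_gauss_vec :: ('n \<Rightarrow> real) measure) lborel (\<lambda>z. z k)
      = distr (std_gauss_vec :: ('n \<Rightarrow> real) measure) borel (\<lambda>z. z k)"
    by (rule distr_cong) auto
  then show ?thesis
    using distr_std_gauss_vec_component[of k]
    by (simp add: distributed_def std_normal_measure_def)
qed

lemma indep_vars_std_gauss_vec:
  "prob_space.indep_vars (std_gauss_vec :: ('n::finite \<Rightarrow> real) measure) (\<lambda>_. borel) (\<lambda>k z. z k) UNIV"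
proof -
  interpret prob_space "std_gauss_vec :: ('n \<Rightarrow> real) measure"
    by (rule prob_space_std_gauss_vec)
  have "distr (std_gauss_vec :: ('n \<Rightarrow> real) measure) (\<Pi>\<^sub>M i\<in>UNIV. borel) (\<lambda>x. \<lambda>i\<in>UNIV. x i)
      = distr std_gauss_vec (\<Pi>\<^sub>M i\<in>UNIV. borel) (\<lambda>x. x)"
    by (rule distr_cong) auto
  also have "\<dots> = std_gauss_vec"
    unfolding std_gauss_vec_def by (rule distr_id2, rule sets_PiM_cong) auto
  also have "\<dots> = (\<Pi>\<^sub>M i\<in>UNIV. distr std_gauss_vec borel (\<lambda>z. z i))"
    by (simp only: distr_std_gauss_vec_component) (simp add: std_gauss_vec_def)
  finally show ?thesis
    by (subst indep_vars_iff_distr_eq_PiM) simp_all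
qed

lemma distributed_std_gauss_vec_linear_combination:
  fixes w :: "'n::finite \<Rightarrow> real"
  assumes "\<exists>k. w k \<noteq> 0"
  shows "distributed (std_gauss_vec :: ('n \<Rightarrow> real) measure) lborel (\<lambda>z. \<Sum>k\<in>UNIV. w k * z k)
           (normal_density 0 (sqrt (\<Sum>k\<in>UNIV. (w k)\<^sup>2)))"
proof -
  interpret prob_space "std_gauss_vec :: ('n \<Rightarrow> real) measure"
    by (rule prob_space_std_gauss_vec)
  define I where "I = {k. w k \<noteq> 0}"
  have I: "finite I" "I \<noteq> {}" using assms by (auto simp: I_def)
  have "indep_vars (\<lambda>_. borel) (\<lambda>k z. w k * z k) I"
    by (rule indep_vars_compose2[where X = "\<lambda>k z. z k",
          OF indep_vars_subset[OF indep_vars_std_gauss_vec]]) (simp_all, measurable)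
  moreover have "distributed std_gauss_vec lborel (\<lambda>z. w k * z k) (normal_density 0 \<bar>w k\<bar>)"
    if "k \<in> I" for k
    using normal_density_affine[OF distributed_std_gauss_vec_component[of k], of "w k" 0] that
    by (simp add: I_def)
  ultimately have "distributed std_gauss_vec lborel (\<lambda>z. \<Sum>k\<in>I. w k * z k)
      (normal_density (\<Sum>k\<in>I. 0) (sqrt (\<Sum>k\<in>I. \<bar>w k\<bar>\<^sup>2)))"
    by (intro sum_indep_normal I) (auto simp: I_def)
  moreover have "(\<lambda>z. \<Sum>k\<in>I. w k * z k) = (\<lambda>z. \<Sum>k\<in>UNIV. w k * z k)"
    by (intro ext sum.mono_neutral_left) (auto simp: I_def)
  moreover have "(\<Sum>k\<in>I. \<bar>w k\<bar>\<^sup>2) = (\<Sum>k\<in>UNIV. (w k)\<^sup>2)"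
    by (simp, intro sum.mono_neutral_left) (auto simp: I_def)
  ultimately show ?thesis by simp
qed

lemma measure_std_gauss_vec_halfspace:
  fixes w :: "'n::finite \<Rightarrow> real"
  assumes "\<exists>k. w k \<noteq> 0"
  shows "measure (std_gauss_vec :: ('n \<Rightarrow> real) measure) {z. 0 \<le> b + (\<Sum>k\<in>UNIV. w k * z k)}
       = measure std_normal_measure {x. 0 \<le> b / sqrt (\<Sum>k\<in>UNIV. (w k)\<^sup>2) + x}"
proof -
  interpret prob_space "std_gauss_vec :: ('n \<Rightarrow> real) measure"
    by (rule prob_space_std_gauss_vec)
  define s where "s = sqrt (\<Sum>k\<in>UNIV. (w k)\<^sup>2)"
  define Y where "Y = (\<lambda>z::'n \<Rightarrow> real. (\<Sum>k\<in>UNIV. w k * z k) / s)"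
  obtain k0 where "w k0 \<noteq> 0" using assms by blast
  then have "0 < (w k0)\<^sup>2" by simp
  also have "\<dots> \<le> (\<Sum>k\<in>UNIV. (w k)\<^sup>2)" by (rule member_le_sum) auto
  finally have "0 < s" by (simp add: s_def)
  have "distributed std_gauss_vec lborel Y (normal_density (0 + (1/s) * 0) (\<bar>1/s\<bar> * s))"
    using normal_density_affine[OF distributed_std_gauss_vec_linear_combination[OF assms], of "1/s" 0]
      \<open>0 < s\<close>
    by (simp add: Y_def s_def)
  then have Y: "distr std_gauss_vec lborel Y = std_normal_measure" "Y \<in> measurable std_gauss_vec lborel"
    using \<open>0 < s\<close> by (simp_all add: distributed_def std_normal_measure_def)
  have "{z. 0 \<le> b + (\<Sum>k\<in>UNIV. w k * z k)} = Y -` {x. 0 \<le> b / s + x} \<inter> space std_gauss_vec"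
    using \<open>0 < s\<close> by (auto simp: Y_def add_divide_distrib[symmetric] zero_le_divide_iff)
  then show ?thesis
    using measure_distr[OF Y(2), of "{x. 0 \<le> b / s + x}"] Y(1) by (simp add: s_def)
qed

lemma var_diff_eq_sum_square:
  fixes A :: "real^'n::finite^'n"
  assumes "A ** transpose A = S"
  shows "var_diff S i j = (\<Sum>k\<in>UNIV. (A $ i $ k - A $ j $ k)\<^sup>2)"
proof -
  have "S $ p $ q = (\<Sum>k\<in>UNIV. A $ p $ k * A $ q $ k)" for p q
    using assms[symmetric] by (simp add: matrix_matrix_mult_def transpose_def)
  then show ?thesis
    by (simp add: var_diff_def power2_eq_square algebra_simps sum.distrib sum_subtractf
        sum_distrib_left)
qed

lemma pair_prob_eq_measure_std_gauss_vec:
  fixes mu :: "real^'n::finite" and S :: "real^'n^'n"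
  defines "A \<equiv> (SOME A :: real^'n^'n. A ** transpose A = S)"
  shows "pair_prob mu S i j = measure (std_gauss_vec :: ('n \<Rightarrow> real) measure)
      {z. 0 \<le> (mu $ i - mu $ j) + (\<Sum>k\<in>UNIV. (A $ i $ k - A $ j $ k) * z k)}"
proof -
  have "(\<lambda>z. mu + A *v (\<chi> i. z i)) \<in> borel_measurable (std_gauss_vec :: ('n \<Rightarrow> real) measure)"
  proof (subst borel_measurable_euclidean_space, intro ballI)
    fix b :: "real^'n" assume "b \<in> Basis"
    then obtain i where "b = axis i 1" by (auto simp: Basis_vec_def)
    then have "(\<lambda>z. (mu + A *v (\<chi> i. z i)) \<bullet> b) = (\<lambda>z. mu $ i + (\<Sum>k\<in>UNIV. A $ i $ k * z k))"
      by (simp add: inner_axis matrix_vector_mult_def)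
    then show "(\<lambda>z. (mu + A *v (\<chi> i. z i)) \<bullet> b) \<in> borel_measurable std_gauss_vec"
      by simp
  qed
  moreover have "{x::real^'n. x $ j \<le> x $ i} \<in> sets borel"
    by (intro borel_closed closed_Collect_le continuous_on_component continuous_on_id)
  ultimately have "pair_prob mu S i j = measure (std_gauss_vec :: ('n \<Rightarrow> real) measure)
      ((\<lambda>z. mu + A *v (\<chi> i. z i)) -` {x. x $ j \<le> x $ i} \<inter> space std_gauss_vec)"
    unfolding pair_prob_def mvn_def A_def[symmetric] by (rule measure_distr)
  also have "(\<lambda>z. mu + A *v (\<chi> i. z i)) -` {x. x $ j \<le> x $ i} \<inter> space std_gauss_vec =
      {z. 0 \<le> (mu $ i - mu $ j) + (\<Sum>k\<in>UNIV. (A $ i $ k - A $ j $ k) * z k)}"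
    by (auto simp: matrix_vector_mult_def left_diff_distrib sum_subtractf)
  finally show ?thesis .
qed

lemma pair_prob_refl: "pair_prob mu S i i = 1"
proof -
  interpret prob_space "std_gauss_vec :: ('n::finite \<Rightarrow> real) measure"
    by (rule prob_space_std_gauss_vec)
  show ?thesis
    by (simp add: pair_prob_eq_measure_std_gauss_vec prob_space[unfolded space_std_gauss_vec])
qed

lemma pair_prob_eq_std_normal:
  fixes mu :: "real^'n::finite" and S :: "real^'n^'n"
  assumes "psd S" and "0 < var_diff S i j"
  shows "pair_prob mu S i j
    = measure std_normal_measure {x. 0 \<le> (mu $ i - mu $ j) / sqrt (var_diff S i j) + x}"
proof -
  define A where "A = (SOME A :: real^'n^'n. A ** transpose A = S)"
  have "A ** transpose A = S"
    unfolding A_def using psd_factor[OF assms(1)] by (rule someI_ex)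
  note var_diff = var_diff_eq_sum_square[OF this, of i j]
  then have "\<exists>k. A $ i $ k - A $ j $ k \<noteq> 0"
    using assms(2) by (metis (no_types, lifting) power2_eq_square mult_zero_left sum.neutral
        less_irrefl)
  from measure_std_gauss_vec_halfspace[OF this, of "mu $ i - mu $ j"] show ?thesis
    by (simp add: pair_prob_eq_measure_std_gauss_vec A_def[symmetric] var_diff)
qed

lemma pair_prob_rescale:
  fixes mu mu' :: "real^'n::finite" and S S' :: "real^'n^'n"
  assumes "psd S" and "psd S'" and "0 < var_diff S i j" and "0 < t"
    and "var_diff S' i j = t\<^sup>2 * var_diff S i j" and "mu' $ i - mu' $ j = t * (mu $ i - mu $ j)"
  shows "pair_prob mu' S' i j = pair_prob mu S i j"
proof -
  have "0 < var_diff S' i j" using assms(3-5) by simp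
  moreover have "(mu' $ i - mu' $ j) / sqrt (var_diff S' i j)
      = (mu $ i - mu $ j) / sqrt (var_diff S i j)"
    using assms(3-6) by (simp add: real_sqrt_mult)
  ultimately show ?thesis
    using assms(1,2,3) by (simp add: pair_prob_eq_std_normal)
qed

section \<open>Perturbing a normalized model\<close>

lemma ex_not_mem_if_card_less:
  fixes A :: "'n::finite set"
  assumes "card A < CARD('n)"
  shows "\<exists>k. k \<notin> A"
proof (rule ccontr)
  assume "\<not> (\<exists>k. k \<notin> A)"
  then have "A = UNIV" by auto
  then show False using assms by simp
qed

lemma ex_compatible_direction:
  fixes mu :: "real^'n::finite"
  assumes "CARD('n) \<ge> 2"
  obtains a g :: "real^'n" and p q where "a $ p \<noteq> a $ q"
    and "\<And>i j. g $ i - g $ j = (a $ i + a $ j) * (mu $ i - mu $ j)"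
proof (cases "\<exists>p q. mu $ p \<noteq> mu $ q")
  case True
  then obtain p q where "mu $ p \<noteq> mu $ q" by blast
  moreover have "(\<chi> i. (mu $ i)\<^sup>2) $ i - (\<chi> i. (mu $ i)\<^sup>2) $ j = (mu $ i + mu $ j) * (mu $ i - mu $ j)"
    for i j by (simp add: power2_eq_square algebra_simps)
  ultimately show ?thesis using that by blast
next
  case False
  fix p :: 'n
  obtain q where "q \<notin> {p}"
    using ex_not_mem_if_card_less[of "{p}"] assms by auto
  then have "axis p (1::real) $ p \<noteq> axis p 1 $ q"
    by (auto simp: axis_def)
  moreover have "(0::real^'n) $ i - 0 $ j = (axis p 1 $ i + axis p 1 $ j) * (mu $ i - mu $ j)" for i j
    using False by simp
  ultimately show ?thesis using that by blast
qed

definition perturbed_var_diff :: "real^'n::finite^'n \<Rightarrow> real^'n \<Rightarrow> real \<Rightarrow> 'n \<Rightarrow> 'n \<Rightarrow> real" where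
  "perturbed_var_diff S a e i j = (1 + e * (a $ i + a $ j))\<^sup>2 * var_diff S i j"

lemma eventually_perturbed_var_diff:
  fixes S :: "real^'n::finite^'n"
  assumes "psd S" and "S *v 1 = 0" and "rank S = CARD('n) - 1"
  shows "\<forall>\<^sub>F e in at_right 0. conditionally_negative_definite (perturbed_var_diff S a e)
    \<and> (\<forall>i j. 0 < 1 + e * (a $ i + a $ j))"
proof -
  obtain \<delta> where "0 < \<delta>" and \<delta>:
    "\<And>D. (\<And>i j. \<bar>D i j - var_diff S i j\<bar> < \<delta>) \<Longrightarrow> conditionally_negative_definite D"
    using conditionally_negative_definite_perturb[OF conditionally_negative_definite_var_diff[OF assms]]
    by blast
  have "((\<lambda>e. perturbed_var_diff S a e i j) \<longlongrightarrow> var_diff S i j) (at_right 0)" for i j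
    unfolding perturbed_var_diff_def by (auto intro!: tendsto_eq_intros)
  then have "\<forall>\<^sub>F e in at_right 0. \<forall>i j. \<bar>perturbed_var_diff S a e i j - var_diff S i j\<bar> < \<delta>"
    using \<open>0 < \<delta>\<close> by (intro eventually_all_finite) (simp add: tendsto_iff dist_real_def)
  moreover have "((\<lambda>e. 1 + e * (a $ i + a $ j)) \<longlongrightarrow> 1) (at_right 0)" for i j
    by (auto intro!: tendsto_eq_intros)
  then have "\<forall>\<^sub>F e in at_right 0. \<forall>i j. 0 < 1 + e * (a $ i + a $ j)"
    by (intro eventually_all_finite order_tendstoD(1)) auto
  ultimately show ?thesis
    by eventually_elim (blast intro: \<delta>)
qed

definition perturbed_model ::
    "real^'n::finite \<Rightarrow> real^'n^'n \<Rightarrow> real^'n \<Rightarrow> real^'n \<Rightarrow> real \<Rightarrow> (real^'n) \<times> (real^'n^'n)" where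
  "perturbed_model mu S a g e = probit_normalize (mu + e *\<^sub>R g) (mds_gram (perturbed_var_diff S a e))"

lemma perturbed_model_rescales:
  fixes S :: "real^'n::finite^'n"
  assumes "CARD('n) \<ge> 2" and "transpose S = S"
    and "\<And>i j. g $ i - g $ j = (a $ i + a $ j) * (mu $ i - mu $ j)"
    and "conditionally_negative_definite (perturbed_var_diff S a e)"
    and "perturbed_model mu S a g e = (mu', S')"
  shows "probit_normalized mu' S'"
    and "\<exists>\<kappa>>0. \<forall>i j.
      var_diff S' i j = (sqrt \<kappa> * (1 + e * (a $ i + a $ j)))\<^sup>2 * var_diff S i j \<and>
      mu' $ i - mu' $ j = sqrt \<kappa> * (1 + e * (a $ i + a $ j)) * (mu $ i - mu $ j)"
proof -
  let ?D = "perturbed_var_diff S a e"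
  have sym: "?D i j = ?D j i" for i j
    using symmetric_matrix_entry[OF assms(2), of i j]
    by (simp add: perturbed_var_diff_def var_diff_def add.commute)
  have diag: "?D i i = 0" for i
    by (simp add: perturbed_var_diff_def)
  note gram = psd_mds_gram[OF sym assms(4)] mds_gram_one rank_mds_gram[OF sym assms(4)] assms(1)
    assms(5)[unfolded perturbed_model_def]
  show "probit_normalized mu' S'"
    by (rule probit_normalize_eq(1)[OF gram])
  obtain \<kappa> where "0 < \<kappa>" and \<kappa>:
    "mu' = sqrt \<kappa> *\<^sub>R (centering_matrix *v (mu + e *\<^sub>R g))" "S' = \<kappa> *\<^sub>R mds_gram ?D"
    using probit_normalize_eq(2)[OF gram] by blast
  have "var_diff S' i j = (sqrt \<kappa> * (1 + e * (a $ i + a $ j)))\<^sup>2 * var_diff S i j" for i j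
    using \<open>0 < \<kappa>\<close>
    by (simp add: \<kappa> var_diff_scaleR var_diff_mds_gram[OF sym diag] perturbed_var_diff_def
        power_mult_distrib)
  moreover have "mu' $ i - mu' $ j = sqrt \<kappa> * (1 + e * (a $ i + a $ j)) * (mu $ i - mu $ j)" for i j
  proof -
    have "mu' $ i - mu' $ j = sqrt \<kappa> * ((centering_matrix *v (mu + e *\<^sub>R g)) $ i
        - (centering_matrix *v (mu + e *\<^sub>R g)) $ j)"
      by (simp add: \<kappa> right_diff_distrib)
    also have "\<dots> = sqrt \<kappa> * ((mu + e *\<^sub>R g) $ i - (mu + e *\<^sub>R g) $ j)"
      by (simp only: centering_matrix_diff)
    also have "(mu + e *\<^sub>R g) $ i - (mu + e *\<^sub>R g) $ j = (mu $ i - mu $ j) + e * (g $ i - g $ j)"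
      by (simp add: algebra_simps)
    finally show ?thesis
      by (simp add: assms(3) algebra_simps)
  qed
  ultimately show "\<exists>\<kappa>>0. \<forall>i j.
      var_diff S' i j = (sqrt \<kappa> * (1 + e * (a $ i + a $ j)))\<^sup>2 * var_diff S i j \<and>
      mu' $ i - mu' $ j = sqrt \<kappa> * (1 + e * (a $ i + a $ j)) * (mu $ i - mu $ j)"
    using \<open>0 < \<kappa>\<close> by blast
qed

lemma perturbed_model_pair_prob:
  fixes S :: "real^'n::finite^'n"
  assumes "CARD('n) \<ge> 2" and "probit_normalized mu S"
    and "\<And>i j. g $ i - g $ j = (a $ i + a $ j) * (mu $ i - mu $ j)"
    and "conditionally_negative_definite (perturbed_var_diff S a e) \<and> (\<forall>i j. 0 < 1 + e * (a $ i + a $ j))"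
    and "perturbed_model mu S a g e = (mu', S')"
  shows "probit_normalized mu' S' \<and> (\<forall>i j. pair_prob mu S i j = pair_prob mu' S' i j)"
proof -
  have S: "psd S" "S *v 1 = 0" "rank S = CARD('n) - 1"
    using assms(2) by (simp_all add: probit_normalized_def)
  then have "transpose S = S" by (simp add: psd_def)
  note rescales = perturbed_model_rescales[OF assms(1) this assms(3) conjunct1[OF assms(4)] assms(5)]
  obtain \<kappa> where "0 < \<kappa>" and \<kappa>: "\<And>i j.
      var_diff S' i j = (sqrt \<kappa> * (1 + e * (a $ i + a $ j)))\<^sup>2 * var_diff S i j \<and>
      mu' $ i - mu' $ j = sqrt \<kappa> * (1 + e * (a $ i + a $ j)) * (mu $ i - mu $ j)"
    using rescales(2) by blast
  have "pair_prob mu S i j = pair_prob mu' S' i j" for i j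
  proof (cases "i = j")
    case True
    then show ?thesis by (simp add: pair_prob_refl)
  next
    case False
    show ?thesis
      using rescales(1) \<open>0 < \<kappa>\<close> assms(4) \<kappa>[of i j]
      by (intro pair_prob_rescale[where t = "sqrt \<kappa> * (1 + e * (a $ i + a $ j))",
            OF S(1) _ var_diff_pos[OF S False], symmetric])
        (simp_all add: probit_normalized_def)
  qed
  with rescales(1) show ?thesis by blast
qed

lemma perturbed_model_inj_on:
  fixes S :: "real^'n::finite^'n"
  assumes "CARD('n) \<ge> 3" and "probit_normalized mu S"
    and "\<And>i j. g $ i - g $ j = (a $ i + a $ j) * (mu $ i - mu $ j)" and "a $ p \<noteq> a $ q"
    and "\<And>e. e \<in> E \<Longrightarrow>
      conditionally_negative_definite (perturbed_var_diff S a e) \<and> (\<forall>i j. 0 < 1 + e * (a $ i + a $ j))"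
  shows "inj_on (perturbed_model mu S a g) E"
proof (rule inj_onI)
  fix e1 e2 assume "e1 \<in> E" "e2 \<in> E"
    and eq: "perturbed_model mu S a g e1 = perturbed_model mu S a g e2"
  have S: "psd S" "S *v 1 = 0" "rank S = CARD('n) - 1"
    using assms(2) by (simp_all add: probit_normalized_def)
  then have sym: "transpose S = S" by (simp add: psd_def)
  have "card {p, q} < CARD('n)"
    using assms(1) by (cases "p = q") simp_all
  then obtain k where "k \<notin> {p, q}"
    using ex_not_mem_if_card_less by blast
  obtain mu' S' where
    model: "perturbed_model mu S a g e1 = (mu', S')" "perturbed_model mu S a g e2 = (mu', S')"
    using eq by (metis prod.exhaust)
  have "CARD('n) \<ge> 2" using assms(1) by simp
  define t1 where "t1 \<kappa> i = sqrt \<kappa> * (1 + e1 * (a $ i + a $ k))" for \<kappa> i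
  define t2 where "t2 \<kappa> i = sqrt \<kappa> * (1 + e2 * (a $ i + a $ k))" for \<kappa> i
  obtain \<kappa>1 \<kappa>2 where "0 < \<kappa>1" "0 < \<kappa>2" and
    vd1: "\<And>i. var_diff S' i k = (t1 \<kappa>1 i)\<^sup>2 * var_diff S i k" and
    vd2: "\<And>i. var_diff S' i k = (t2 \<kappa>2 i)\<^sup>2 * var_diff S i k"
    using perturbed_model_rescales(2)[OF \<open>CARD('n) \<ge> 2\<close> sym assms(3) _ model(1)]
      perturbed_model_rescales(2)[OF \<open>CARD('n) \<ge> 2\<close> sym assms(3) _ model(2)]
      assms(5) \<open>e1 \<in> E\<close> \<open>e2 \<in> E\<close> unfolding t1_def t2_def by blast
  have "t1 \<kappa>1 i = t2 \<kappa>2 i" if "i \<noteq> k" for i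
  proof -
    have "(t1 \<kappa>1 i)\<^sup>2 = (t2 \<kappa>2 i)\<^sup>2"
      using vd1[of i] vd2[of i] var_diff_pos[OF S that] by simp
    moreover have "0 < t1 \<kappa>1 i" "0 < t2 \<kappa>2 i"
      using \<open>0 < \<kappa>1\<close> \<open>0 < \<kappa>2\<close> assms(5) \<open>e1 \<in> E\<close> \<open>e2 \<in> E\<close> by (simp_all add: t1_def t2_def)
    ultimately show ?thesis by (simp add: power2_eq_iff_nonneg)
  qed
  then have "t1 \<kappa>1 p * t2 \<kappa>2 q = t2 \<kappa>2 p * t1 \<kappa>1 q"
    using \<open>k \<notin> {p, q}\<close> by auto
  then have "sqrt \<kappa>1 * sqrt \<kappa>2 * ((e1 - e2) * (a $ p - a $ q)) = 0"
    by (simp add: t1_def t2_def algebra_simps)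
  then show "e1 = e2"
    using \<open>0 < \<kappa>1\<close> \<open>0 < \<kappa>2\<close> assms(4) by simp
qed

theorem theorem1:
  fixes mu :: "real^'n::finite" and Sg :: "real^'n^'n"
  assumes "CARD('n) \<ge> 3"
    and "probit_normalized mu Sg"
  shows "\<exists>S :: ((real^'n) \<times> (real^'n^'n)) set. infinite S \<and>
           (\<forall>(mu', Sg') \<in> S. probit_normalized mu' Sg' \<and>
              (\<forall>i j. pair_prob mu Sg i j = pair_prob mu' Sg' i j))"
proof -
  have n2: "CARD('n) \<ge> 2" using assms(1) by simp
  have S: "psd Sg" "Sg *v 1 = 0" "rank Sg = CARD('n) - 1"
    using assms(2) by (simp_all add: probit_normalized_def)
  obtain a g :: "real^'n" and p q where "a $ p \<noteq> a $ q"
    and g: "\<And>i j. g $ i - g $ j = (a $ i + a $ j) * (mu $ i - mu $ j)"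
    by (rule ex_compatible_direction[where mu = mu, OF n2]) blast
  obtain e0 :: real where "0 < e0"
    and good: "\<And>e. e \<in> {0<..<e0} \<Longrightarrow> conditionally_negative_definite (perturbed_var_diff Sg a e)
      \<and> (\<forall>i j. 0 < 1 + e * (a $ i + a $ j))"
    using eventually_perturbed_var_diff[OF S, of a] unfolding eventually_at_right_field by auto
  define model where "model = perturbed_model mu Sg a g"
  have "inj_on model {0<..<e0}"
    unfolding model_def by (rule perturbed_model_inj_on[OF assms g \<open>a $ p \<noteq> a $ q\<close> good])
  then have "infinite (model ` {0<..<e0})"
    using infinite_Ioo[OF \<open>0 < e0\<close>] by (simp add: finite_image_iff)
  moreover have "\<forall>(mu', Sg') \<in> model ` {0<..<e0}.
      probit_normalized mu' Sg' \<and> (\<forall>i j. pair_prob mu Sg i j = pair_prob mu' Sg' i j)"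
    unfolding model_def using perturbed_model_pair_prob[OF n2 assms(2) g good] by fastforce
  ultimately show ?thesis by blast
qed

end
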